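(* Let $(G,\delta)$ be a nilpotent $\mathbb Q$-scalable group of step $s$ that is generated as a group by $\{\delta_q(x_i):q\in\mathbb Q,1\le i\le r\}$ for some $x_1,\dots,x_r\in V_1(G)$. Then $G^{(s)}$, equipped with the $\mathbb Q$-vector space structure $\sigma$ (where $\sigma_q=\delta_q$ if $s=1$ and $\sigma_{n/m}(z)=\delta_m^{-1}(z^{nm^{s-1}})$ for $n\in\mathbb Z,m\in\mathbb N$ if $s\ge2$), is finite dimensional.
   Context: A $\mathbb Q$-scalable group is a group $G$ with a map $\delta\colon\mathbb Q\times G\to G$ such that $\delta_\lambda$ is an automorphism for $\lambda\ne0$, $\delta_\lambda\circ\delta_\mu=\delta_{\lambda\mu}$, and $\delta_0\equiv e_G$. $V_1(G):=\{p:\delta_{t+s}(p)=\delta_t(p)\delta_s(p)\ \forall t,s\in\mathbb Q\}$. $[g,h]=ghg^{-1}h^{-1}$; $G^{(1)}=G$, $G^{(k)}=\langle[G,G^{(k-1)}]\rangle$; step $s$ means $G^{(s+1)}=\{e\}\ne G^{(s)}$. The map $\sigma$ above is known to make the abelian group $G^{(s)}$ a $\mathbb Q$-vector space. *)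

theory Defs
  imports "HOL-Algebra.Algebra"
begin

definition Q_scalable :: "('a, 'b) monoid_scheme \<Rightarrow> (rat \<Rightarrow> 'a \<Rightarrow> 'a) \<Rightarrow> bool" where
  "Q_scalable G \<delta> \<longleftrightarrow> group G
     \<and> (\<forall>l. l \<noteq> 0 \<longrightarrow> \<delta> l \<in> iso G G)
     \<and> (\<forall>l m. \<forall>x\<in>carrier G. \<delta> l (\<delta> m x) = \<delta> (l * m) x)
     \<and> (\<forall>x\<in>carrier G. \<delta> 0 x = \<one>\<^bsub>G\<^esub>)"

definition V1 :: "('a, 'b) monoid_scheme \<Rightarrow> (rat \<Rightarrow> 'a \<Rightarrow> 'a) \<Rightarrow> 'a set" where
  "V1 G \<delta> = {p \<in> carrier G. \<forall>t s. \<delta> (t + s) p = \<delta> t p \<otimes>\<^bsub>G\<^esub> \<delta> s p}"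

definition gcomm :: "('a, 'b) monoid_scheme \<Rightarrow> 'a \<Rightarrow> 'a \<Rightarrow> 'a" where
  "gcomm G g h = g \<otimes>\<^bsub>G\<^esub> h \<otimes>\<^bsub>G\<^esub> inv\<^bsub>G\<^esub> g \<otimes>\<^bsub>G\<^esub> inv\<^bsub>G\<^esub> h"

text \<open>Lower central series, indexed as in the paper: lcs G 1 = G,
  lcs G (k+1) = <[G, lcs G k]>.  (lcs G 0 is set to G as a harmless convention.)\<close>
fun lcs :: "('a, 'b) monoid_scheme \<Rightarrow> nat \<Rightarrow> 'a set" where
  "lcs G 0 = carrier G"
| "lcs G (Suc 0) = carrier G"
| "lcs G (Suc (Suc k)) =
     generate G {gcomm G g h | g h. g \<in> carrier G \<and> h \<in> lcs G (Suc k)}"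

definition nilpotent_step :: "('a, 'b) monoid_scheme \<Rightarrow> nat \<Rightarrow> bool" where
  "nilpotent_step G s \<longleftrightarrow> s \<ge> 1 \<and> lcs G (s + 1) = {\<one>\<^bsub>G\<^esub>} \<and> lcs G s \<noteq> {\<one>\<^bsub>G\<^esub>}"

definition sigma :: "('a, 'b) monoid_scheme \<Rightarrow> (rat \<Rightarrow> 'a \<Rightarrow> 'a) \<Rightarrow> nat \<Rightarrow> rat \<Rightarrow> 'a \<Rightarrow> 'a" where
  "sigma G \<delta> s q z =
     (if s = 1 then \<delta> q z
      else (case quotient_of q of (n, m) \<Rightarrow>
              \<delta> (1 / of_int m) (z [^]\<^bsub>G\<^esub> (n * m ^ (s - 1)))))"

text \<open>Finite dimensionality of the Q-vector space (lcs G s, group operation, sigma):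
  some finite subset B of lcs G s spans it, i.e. every element is a finite
  linear combination  sigma_{q_1} b_1 * ... * sigma_{q_k} b_k  with b_i in B.\<close>
definition finite_dim_sigma :: "('a, 'b) monoid_scheme \<Rightarrow> (rat \<Rightarrow> 'a \<Rightarrow> 'a) \<Rightarrow> nat \<Rightarrow> bool" where
  "finite_dim_sigma G \<delta> s \<longleftrightarrow>
     (\<exists>B. finite B \<and> B \<subseteq> lcs G s \<and>
        (\<forall>z\<in>lcs G s. \<exists>l :: (rat \<times> 'a) list. snd ` set l \<subseteq> B \<and>
            z = foldr (\<lambda>(q, b) acc. sigma G \<delta> s q b \<otimes>\<^bsub>G\<^esub> acc) l \<one>\<^bsub>G\<^esub>))"

end

theory Submission
  imports Defs
begin

text \<open>As \<open>lcs G (s + 1)\<close> is trivial, the \<open>s\<close>-fold nested commutator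
  \<open>[g\<^sub>1, [g\<^sub>2, \<dots>, g\<^sub>s]]\<close> is multiplicative in each argument. For \<open>y \<in> V1 G \<delta>\<close>
  the map \<open>t \<mapsto> \<delta> t y\<close> is a homomorphism from the additive group of \<open>\<rat>\<close>, so
  \<open>c t = [\<delta> (t 0) y\<^sub>0, \<dots>, \<delta> (t (s-1)) y\<^sub>s\<^sub>-\<^sub>1]\<close> is additive in every \<open>t i\<close>. Hence
  rational scalars can be moved from one slot to another, \<open>c t\<close> depends only on the
  product of the \<open>t i\<close>, and \<open>c t = sigma G \<delta> s (\<Prod>i<s. t i) (c (\<lambda>_. 1))\<close>. Since
  \<open>lcs G s\<close> is generated modulo \<open>lcs G (s + 1)\<close> by \<open>s\<close>-fold commutators of the
  generators \<open>\<delta> q (x i)\<close>, it is spanned by the finitely many commutators of the \<open>x i\<close>.\<close>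

fun nested_comm :: "('a, 'b) monoid_scheme \<Rightarrow> 'a list \<Rightarrow> 'a" where
  "nested_comm G [] = \<one>\<^bsub>G\<^esub>"
| "nested_comm G [g] = g"
| "nested_comm G (g # h # hs) = gcomm G g (nested_comm G (h # hs))"

definition nested_comms :: "('a, 'b) monoid_scheme \<Rightarrow> 'a set \<Rightarrow> nat \<Rightarrow> 'a set" where
  "nested_comms G S k = {nested_comm G gs | gs. length gs = k \<and> set gs \<subseteq> S}"

context group
begin

lemma mult_inv_mult_cancel [simp]: "x \<in> carrier G \<Longrightarrow> y \<in> carrier G \<Longrightarrow> x \<otimes> (inv x \<otimes> y) = y"
  by (simp add: m_assoc [symmetric])

lemma inv_mult_mult_cancel [simp]: "x \<in> carrier G \<Longrightarrow> y \<in> carrier G \<Longrightarrow> inv x \<otimes> (x \<otimes> y) = y"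
  by (simp add: m_assoc [symmetric])

lemma gcomm_closed [simp]: "g \<in> carrier G \<Longrightarrow> h \<in> carrier G \<Longrightarrow> gcomm G g h \<in> carrier G"
  by (simp add: gcomm_def)

lemma gcomm_one_left [simp]: "h \<in> carrier G \<Longrightarrow> gcomm G \<one> h = \<one>"
  by (simp add: gcomm_def)

lemma gcomm_one_right [simp]: "g \<in> carrier G \<Longrightarrow> gcomm G g \<one> = \<one>"
  by (simp add: gcomm_def)

lemma gcomm_mult_left:
  "a \<in> carrier G \<Longrightarrow> g \<in> carrier G \<Longrightarrow> h \<in> carrier G \<Longrightarrow>
    gcomm G (a \<otimes> g) h = a \<otimes> gcomm G g h \<otimes> inv a \<otimes> gcomm G a h"
  by (simp add: gcomm_def m_assoc inv_mult_group)

lemma gcomm_mult_right: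
  "g \<in> carrier G \<Longrightarrow> h \<in> carrier G \<Longrightarrow> h' \<in> carrier G \<Longrightarrow>
    gcomm G g (h \<otimes> h') = gcomm G g h \<otimes> (h \<otimes> gcomm G g h' \<otimes> inv h)"
  by (simp add: gcomm_def m_assoc inv_mult_group)

lemma gcomm_inv_left:
  "g \<in> carrier G \<Longrightarrow> h \<in> carrier G \<Longrightarrow> gcomm G (inv g) h = inv g \<otimes> inv (gcomm G g h) \<otimes> g"
  by (simp add: gcomm_def m_assoc inv_mult_group)

lemma gcomm_inv_right:
  "g \<in> carrier G \<Longrightarrow> h \<in> carrier G \<Longrightarrow> gcomm G g (inv h) = inv h \<otimes> inv (gcomm G g h) \<otimes> h"
  by (simp add: gcomm_def m_assoc inv_mult_group)

lemma conj_eq_gcomm_mult: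
  "a \<in> carrier G \<Longrightarrow> h \<in> carrier G \<Longrightarrow> a \<otimes> h \<otimes> inv a = gcomm G a h \<otimes> h"
  by (simp add: gcomm_def m_assoc)

lemma mult_eq_gcomm_mult_swap:
  "g \<in> carrier G \<Longrightarrow> h \<in> carrier G \<Longrightarrow> g \<otimes> h = gcomm G g h \<otimes> (h \<otimes> g)"
  by (simp add: gcomm_def m_assoc)

lemma normal_if_gcomm_closed:
  assumes "subgroup H G" and "\<And>g h. g \<in> carrier G \<Longrightarrow> h \<in> H \<Longrightarrow> gcomm G g h \<in> H"
  shows "H \<lhd> G"
  unfolding normal_inv_iff
  using assms conj_eq_gcomm_mult subgroup.mem_carrier subgroup.m_closed by fastforce

lemma gcomm_generate_left:
  assumes N: "N \<lhd> G" and A: "A \<subseteq> carrier G" and h: "h \<in> carrier G"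
    and gen: "\<And>a. a \<in> A \<Longrightarrow> gcomm G a h \<in> N" and g: "g \<in> generate G A"
  shows "gcomm G g h \<in> N"
proof -
  interpret N: normal N G by (rule N)
  have "subgroup {g \<in> carrier G. gcomm G g h \<in> N} G"
  proof (rule subgroupI)
    have "\<one> \<in> {g \<in> carrier G. gcomm G g h \<in> N}"
      using h by simp
    then show "{g \<in> carrier G. gcomm G g h \<in> N} \<noteq> {}" by blast
  next
    fix g assume "g \<in> {g \<in> carrier G. gcomm G g h \<in> N}"
    then have g: "g \<in> carrier G" and "gcomm G g h \<in> N" by simp_all
    then have "inv g \<otimes> inv (gcomm G g h) \<otimes> g \<in> N"
      by (intro N.inv_op_closed1 N.m_inv_closed)
    then show "inv g \<in> {g \<in> carrier G. gcomm G g h \<in> N}"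
      using g h by (simp add: gcomm_inv_left)
  next
    fix g g' assume "g \<in> {g \<in> carrier G. gcomm G g h \<in> N}" "g' \<in> {g \<in> carrier G. gcomm G g h \<in> N}"
    then have g: "g \<in> carrier G" "g' \<in> carrier G" and "gcomm G g h \<in> N" "gcomm G g' h \<in> N"
      by simp_all
    then have "g \<otimes> gcomm G g' h \<otimes> inv g \<otimes> gcomm G g h \<in> N"
      by (intro N.m_closed N.inv_op_closed2)
    then show "g \<otimes> g' \<in> {g \<in> carrier G. gcomm G g h \<in> N}"
      using g h by (simp add: gcomm_mult_left)
  qed auto
  then have "generate G A \<subseteq> {g \<in> carrier G. gcomm G g h \<in> N}"
    using A gen by (intro generate_subgroup_incl) auto
  then show ?thesis
    using g by blast
qed

lemma gcomm_generate_right: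
  assumes N: "N \<lhd> G" and A: "A \<subseteq> carrier G" and g: "g \<in> carrier G"
    and gen: "\<And>a. a \<in> A \<Longrightarrow> gcomm G g a \<in> N" and h: "h \<in> generate G A"
  shows "gcomm G g h \<in> N"
proof -
  interpret N: normal N G by (rule N)
  have "subgroup {h \<in> carrier G. gcomm G g h \<in> N} G"
  proof (rule subgroupI)
    have "\<one> \<in> {h \<in> carrier G. gcomm G g h \<in> N}"
      using g by simp
    then show "{h \<in> carrier G. gcomm G g h \<in> N} \<noteq> {}" by blast
  next
    fix h assume "h \<in> {h \<in> carrier G. gcomm G g h \<in> N}"
    then have h: "h \<in> carrier G" and "gcomm G g h \<in> N" by simp_all
    then have "inv h \<otimes> inv (gcomm G g h) \<otimes> h \<in> N"
      by (intro N.inv_op_closed1 N.m_inv_closed)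
    then show "inv h \<in> {h \<in> carrier G. gcomm G g h \<in> N}"
      using g h by (simp add: gcomm_inv_right)
  next
    fix h h' assume "h \<in> {h \<in> carrier G. gcomm G g h \<in> N}" "h' \<in> {h \<in> carrier G. gcomm G g h \<in> N}"
    then have h: "h \<in> carrier G" "h' \<in> carrier G" and "gcomm G g h \<in> N" "gcomm G g h' \<in> N"
      by simp_all
    then have "gcomm G g h \<otimes> (h \<otimes> gcomm G g h' \<otimes> inv h) \<in> N"
      by (intro N.m_closed N.inv_op_closed2)
    then show "h \<otimes> h' \<in> {h \<in> carrier G. gcomm G g h \<in> N}"
      using g h by (simp add: gcomm_mult_right)
  qed auto
  then have "generate G A \<subseteq> {h \<in> carrier G. gcomm G g h \<in> N}"
    using A gen by (intro generate_subgroup_incl) auto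
  then show ?thesis
    using h by blast
qed

lemma generate_Un_one: "A \<subseteq> carrier G \<Longrightarrow> generate G (A \<union> {\<one>}) = generate G A"
  by (intro equalityI generate_subgroup_incl generate_is_subgroup mono_generate)
     (auto intro: generate.one generate.incl)

declare lcs.simps(3) [simp del]

lemma lcs_subgroup: "subgroup (lcs G k) G"
proof (induction k)
  case (Suc k)
  then have "{gcomm G g h | g h. g \<in> carrier G \<and> h \<in> lcs G k} \<subseteq> carrier G"
    using subgroup.mem_carrier by fastforce
  with Suc show ?case
    by (cases k) (simp_all add: subgroup_self lcs.simps(3) generate_is_subgroup)
qed (simp add: subgroup_self)

lemma lcs_mem_carrier [simp]: "x \<in> lcs G k \<Longrightarrow> x \<in> carrier G"
  by (rule subgroup.mem_carrier[OF lcs_subgroup])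

lemma lcs_m_closed [simp]: "x \<in> lcs G k \<Longrightarrow> y \<in> lcs G k \<Longrightarrow> x \<otimes> y \<in> lcs G k"
  by (rule subgroup.m_closed[OF lcs_subgroup])

lemma gcomm_mem_lcs_Suc: "g \<in> carrier G \<Longrightarrow> h \<in> lcs G k \<Longrightarrow> gcomm G g h \<in> lcs G (Suc k)"
  by (cases k) (auto simp: lcs.simps(3) intro: generate.incl)

lemma lcs_Suc_subset: "lcs G (Suc k) \<subseteq> lcs G k"
proof (induction k)
  case (Suc k)
  show ?case
  proof (cases k)
    case 0
    then show ?thesis using subgroup.subset[OF lcs_subgroup] by simp
  next
    case (Suc k')
    have "lcs G (Suc (Suc k')) \<subseteq> lcs G (Suc k')"
      using Suc.IH \<open>k = Suc k'\<close> by simp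
    then have "generate G {gcomm G g h | g h. g \<in> carrier G \<and> h \<in> lcs G (Suc (Suc k'))}
        \<subseteq> generate G {gcomm G g h | g h. g \<in> carrier G \<and> h \<in> lcs G (Suc k')}"
      by (intro mono_generate) blast
    then show ?thesis
      using \<open>k = Suc k'\<close> by (simp only: lcs.simps(3) [symmetric])
  qed
qed simp

lemma lcs_normal: "lcs G k \<lhd> G"
proof (rule normal_if_gcomm_closed[OF lcs_subgroup])
  show "gcomm G g h \<in> lcs G k" if "g \<in> carrier G" "h \<in> lcs G k" for g h
    using gcomm_mem_lcs_Suc[OF that] lcs_Suc_subset by blast
qed

definition cong_mod :: "'a set \<Rightarrow> 'a \<Rightarrow> 'a \<Rightarrow> bool" where
  "cong_mod N a b \<longleftrightarrow> a \<in> carrier G \<and> b \<in> carrier G \<and> a \<otimes> inv b \<in> N"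

lemma cong_mod_refl: "N \<lhd> G \<Longrightarrow> a \<in> carrier G \<Longrightarrow> cong_mod N a a"
  by (simp add: cong_mod_def normal.axioms(1) subgroup.one_closed)

lemma cong_mod_trans:
  assumes N: "N \<lhd> G" and "cong_mod N a b" "cong_mod N b c"
  shows "cong_mod N a c"
proof -
  have c: "a \<in> carrier G" "b \<in> carrier G" "c \<in> carrier G"
    and n: "a \<otimes> inv b \<in> N" "b \<otimes> inv c \<in> N"
    using assms by (auto simp: cong_mod_def)
  have "a \<otimes> inv c = (a \<otimes> inv b) \<otimes> (b \<otimes> inv c)"
    using c by (simp add: m_assoc)
  then show ?thesis
    using c n subgroup.m_closed[OF normal_imp_subgroup[OF N]] by (simp add: cong_mod_def)
qed

lemma cong_mod_mult:
  assumes N: "N \<lhd> G" and "cong_mod N a a'" "cong_mod N b b'"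
  shows "cong_mod N (a \<otimes> b) (a' \<otimes> b')"
proof -
  interpret N: normal N G by (rule N)
  have c: "a \<in> carrier G" "a' \<in> carrier G" "b \<in> carrier G" "b' \<in> carrier G"
    and n: "a \<otimes> inv a' \<in> N" "b \<otimes> inv b' \<in> N"
    using assms by (auto simp: cong_mod_def)
  have "(a \<otimes> b) \<otimes> inv (a' \<otimes> b') = (a \<otimes> (b \<otimes> inv b') \<otimes> inv a) \<otimes> (a \<otimes> inv a')"
    using c by (simp add: m_assoc inv_mult_group)
  moreover have "(a \<otimes> (b \<otimes> inv b') \<otimes> inv a) \<otimes> (a \<otimes> inv a') \<in> N"
    using N.m_closed[OF N.inv_op_closed2[OF c(1) n(2)] n(1)] .
  ultimately show ?thesis
    using c by (simp add: cong_mod_def)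
qed

lemma cong_mod_mult_left_mem:
  assumes "N \<lhd> G" "n \<in> N" "a \<in> carrier G"
  shows "cong_mod N (n \<otimes> a) a"
proof -
  have "n \<in> carrier G"
    using subgroup.mem_carrier[OF normal_imp_subgroup[OF assms(1)] assms(2)] .
  then show ?thesis
    using assms by (simp add: cong_mod_def m_assoc)
qed

lemma cong_mod_trivial_eq:
  assumes "cong_mod {\<one>} a b"
  shows "a = b"
proof -
  have "a \<in> carrier G" "b \<in> carrier G" "a \<otimes> inv b = \<one>"
    using assms by (simp_all add: cong_mod_def)
  then have "inv (inv b) = a"
    by (intro inv_equality) simp_all
  with \<open>b \<in> carrier G\<close> show ?thesis by simp
qed

lemma mult_cong_mod_lcs_swap:
  assumes "g \<in> carrier G" "h \<in> lcs G j"
  shows "cong_mod (lcs G (Suc j)) (g \<otimes> h) (h \<otimes> g)"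
  using assms mult_eq_gcomm_mult_swap[of g h]
    cong_mod_mult_left_mem[OF lcs_normal gcomm_mem_lcs_Suc[OF assms]] by simp

lemma conj_cong_mod_lcs:
  assumes "a \<in> carrier G" "h \<in> lcs G j"
  shows "cong_mod (lcs G (Suc j)) (a \<otimes> h \<otimes> inv a) h"
  using assms conj_eq_gcomm_mult[of a h]
    cong_mod_mult_left_mem[OF lcs_normal gcomm_mem_lcs_Suc[OF assms]] by simp

lemma gcomm_mult_left_cong_mod_lcs:
  assumes g: "g \<in> carrier G" "g' \<in> carrier G" and h: "h \<in> lcs G j"
  shows "cong_mod (lcs G (Suc (Suc j))) (gcomm G (g \<otimes> g') h) (gcomm G g h \<otimes> gcomm G g' h)"
proof -
  have c: "gcomm G g h \<in> lcs G (Suc j)" "gcomm G g' h \<in> lcs G (Suc j)"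
    using g h by (simp_all add: gcomm_mem_lcs_Suc)
  have "cong_mod (lcs G (Suc (Suc j))) (g \<otimes> gcomm G g' h \<otimes> inv g \<otimes> gcomm G g h) (gcomm G g' h \<otimes> gcomm G g h)"
    using g c by (intro cong_mod_mult lcs_normal conj_cong_mod_lcs cong_mod_refl) simp_all
  moreover have "cong_mod (lcs G (Suc (Suc j))) (gcomm G g' h \<otimes> gcomm G g h) (gcomm G g h \<otimes> gcomm G g' h)"
    using c by (intro mult_cong_mod_lcs_swap) simp_all
  ultimately show ?thesis
    using g h by (simp add: gcomm_mult_left cong_mod_trans[OF lcs_normal])
qed

lemma gcomm_mult_right_cong_mod_lcs:
  assumes g: "g \<in> carrier G" and h: "h \<in> carrier G" "h' \<in> lcs G j"
  shows "cong_mod (lcs G (Suc (Suc j))) (gcomm G g (h \<otimes> h')) (gcomm G g h \<otimes> gcomm G g h')"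
proof -
  have "gcomm G g h' \<in> lcs G (Suc j)"
    using g h by (simp add: gcomm_mem_lcs_Suc)
  then have "cong_mod (lcs G (Suc (Suc j))) (gcomm G g h \<otimes> (h \<otimes> gcomm G g h' \<otimes> inv h)) (gcomm G g h \<otimes> gcomm G g h')"
    using g h by (intro cong_mod_mult lcs_normal conj_cong_mod_lcs cong_mod_refl) simp_all
  then show ?thesis
    using g h by (simp add: gcomm_mult_right)
qed

lemma gcomm_cong_mod_lcs_right:
  assumes g: "g \<in> carrier G" and h': "h' \<in> lcs G j" and hh': "cong_mod (lcs G (Suc j)) h h'"
  shows "cong_mod (lcs G (Suc (Suc j))) (gcomm G g h) (gcomm G g h')"
proof -
  define n where "n = h \<otimes> inv h'"
  have n: "n \<in> lcs G (Suc j)" and h: "h = n \<otimes> h'"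
    using hh' by (auto simp: cong_mod_def n_def m_assoc)
  have "gcomm G g n \<in> lcs G (Suc (Suc j))" "gcomm G g h' \<in> lcs G (Suc j)"
    using g h' n by (simp_all add: gcomm_mem_lcs_Suc)
  then have "cong_mod (lcs G (Suc (Suc j))) (gcomm G g n \<otimes> (n \<otimes> gcomm G g h' \<otimes> inv n)) (n \<otimes> gcomm G g h' \<otimes> inv n)"
    and "cong_mod (lcs G (Suc (Suc j))) (n \<otimes> gcomm G g h' \<otimes> inv n) (gcomm G g h')"
    using n by (simp_all add: cong_mod_mult_left_mem lcs_normal conj_cong_mod_lcs)
  then show ?thesis
    using g h' n by (simp add: h gcomm_mult_right cong_mod_trans[OF lcs_normal])
qed

lemma nested_comm_Cons: "gs \<noteq> [] \<Longrightarrow> nested_comm G (g # gs) = gcomm G g (nested_comm G gs)"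
  by (cases gs) auto

lemma nested_comm_mem_lcs: "set gs \<subseteq> carrier G \<Longrightarrow> nested_comm G gs \<in> lcs G (length gs)"
proof (induction gs)
  case (Cons g gs)
  then show ?case
    by (cases "gs = []") (simp_all add: nested_comm_Cons gcomm_mem_lcs_Suc)
qed simp

lemma nested_comm_closed [simp]: "set gs \<subseteq> carrier G \<Longrightarrow> nested_comm G gs \<in> carrier G"
  using nested_comm_mem_lcs lcs_mem_carrier by blast

lemma nested_comm_mult_cong_mod_lcs:
  assumes "set us \<subseteq> carrier G" "set vs \<subseteq> carrier G" "a \<in> carrier G" "b \<in> carrier G"
  shows "cong_mod (lcs G (Suc (length us + Suc (length vs))))
    (nested_comm G (us @ (a \<otimes> b) # vs)) (nested_comm G (us @ a # vs) \<otimes> nested_comm G (us @ b # vs))"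
  using assms(1)
proof (induction us)
  case Nil
  show ?case
  proof (cases "vs = []")
    case True
    then show ?thesis using assms by (simp add: cong_mod_refl lcs_normal)
  next
    case False
    then show ?thesis
      using assms gcomm_mult_left_cong_mod_lcs[OF assms(3,4) nested_comm_mem_lcs[OF assms(2)]]
      by (simp add: nested_comm_Cons)
  qed
next
  case (Cons u us)
  let ?k = "length us + Suc (length vs)"
  let ?c = "\<lambda>x. nested_comm G (us @ x # vs)"
  have u: "u \<in> carrier G" and us: "set us \<subseteq> carrier G"
    using Cons.prems by simp_all
  have c: "?c x \<in> lcs G ?k" if "x \<in> carrier G" for x
    using nested_comm_mem_lcs[of "us @ x # vs"] us assms(2) that by simp
  have ca: "?c a \<in> lcs G ?k" and cb: "?c b \<in> lcs G ?k" and cab: "?c (a \<otimes> b) \<in> lcs G ?k"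
    using c assms(3,4) by simp_all
  have "cong_mod (lcs G (Suc (Suc ?k))) (gcomm G u (?c (a \<otimes> b))) (gcomm G u (?c a \<otimes> ?c b))"
    using u ca cb Cons.IH[OF us] by (intro gcomm_cong_mod_lcs_right) simp_all
  moreover have "cong_mod (lcs G (Suc (Suc ?k))) (gcomm G u (?c a \<otimes> ?c b)) (gcomm G u (?c a) \<otimes> gcomm G u (?c b))"
    using u ca cb by (intro gcomm_mult_right_cong_mod_lcs) simp_all
  ultimately show ?case
    by (simp add: nested_comm_Cons cong_mod_trans[OF lcs_normal])
qed

lemma nested_comm_mult:
  assumes "lcs G (Suc (length us + Suc (length vs))) = {\<one>}"
    and "set us \<subseteq> carrier G" "set vs \<subseteq> carrier G" "a \<in> carrier G" "b \<in> carrier G"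
  shows "nested_comm G (us @ (a \<otimes> b) # vs) = nested_comm G (us @ a # vs) \<otimes> nested_comm G (us @ b # vs)"
  using nested_comm_mult_cong_mod_lcs[OF assms(2-5)] assms(1) by (simp add: cong_mod_trivial_eq)

lemma nested_comms_subset_lcs: "S \<subseteq> carrier G \<Longrightarrow> nested_comms G S k \<subseteq> lcs G k"
  unfolding nested_comms_def using nested_comm_mem_lcs by blast

lemma generate_nested_comms_Un_lcs_normal:
  assumes S: "S \<subseteq> carrier G"
  shows "generate G (nested_comms G S (Suc k) \<union> lcs G (Suc (Suc k))) \<lhd> G"
proof -
  let ?B = "nested_comms G S (Suc k) \<union> lcs G (Suc (Suc k))"
  have B: "?B \<subseteq> lcs G (Suc k)"
    using nested_comms_subset_lcs[OF S] lcs_Suc_subset by blast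
  show ?thesis
  proof (rule normal_if_gcomm_closed)
    show "subgroup (generate G ?B) G"
      using B by (intro generate_is_subgroup) (use lcs_mem_carrier in blast)
  next
    fix g h assume "g \<in> carrier G" "h \<in> generate G ?B"
    then have "gcomm G g h \<in> lcs G (Suc (Suc k))"
      using generate_subgroup_incl[OF B lcs_subgroup] by (intro gcomm_mem_lcs_Suc) auto
    then show "gcomm G g h \<in> generate G ?B"
      by (intro generate.incl UnI2)
  qed
qed

lemma gcomm_mem_generate_nested_comms:
  assumes S: "S \<subseteq> carrier G" and gen: "generate G S = carrier G"
    and g: "g \<in> carrier G" and a: "a \<in> nested_comms G S (Suc k) \<union> lcs G (Suc (Suc k))"
  shows "gcomm G g a \<in> generate G (nested_comms G S (Suc (Suc k)) \<union> lcs G (Suc (Suc (Suc k))))"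
proof (cases "a \<in> lcs G (Suc (Suc k))")
  case True
  then show ?thesis
    using gcomm_mem_lcs_Suc[OF g True] by (intro generate.incl UnI2)
next
  case False
  then obtain gs where gs: "a = nested_comm G gs" "length gs = Suc k" "set gs \<subseteq> S"
    using a by (auto simp: nested_comms_def)
  have "gcomm G x a \<in> nested_comms G S (Suc (Suc k))" if x: "x \<in> S" for x
  proof -
    have "gs \<noteq> []"
      using gs(2) by auto
    then have "gcomm G x a = nested_comm G (x # gs)"
      using gs(1) by (simp add: nested_comm_Cons)
    moreover have "length (x # gs) = Suc (Suc k)" "set (x # gs) \<subseteq> S"
      using gs(2,3) x by simp_all
    ultimately show ?thesis
      unfolding nested_comms_def by blast
  qed
  then have "gcomm G x a \<in> generate G (nested_comms G S (Suc (Suc k)) \<union> lcs G (Suc (Suc (Suc k))))"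
    if "x \<in> S" for x
    using that by (intro generate.incl UnI1)
  moreover have "a \<in> carrier G"
    using a nested_comms_subset_lcs[OF S] lcs_mem_carrier by blast
  moreover have "g \<in> generate G S"
    using g gen by simp
  ultimately show ?thesis
    using gcomm_generate_left[OF generate_nested_comms_Un_lcs_normal[OF S] S] by blast
qed

lemma lcs_subset_generate_nested_comms:
  assumes S: "S \<subseteq> carrier G" and gen: "generate G S = carrier G"
  shows "lcs G (Suc k) \<subseteq> generate G (nested_comms G S (Suc k) \<union> lcs G (Suc (Suc k)))"
proof (induction k)
  case 0
  have "S \<subseteq> nested_comms G S (Suc 0)"
    unfolding nested_comms_def by (auto intro!: exI[of _ "[_]"])
  then have "generate G S \<subseteq> generate G (nested_comms G S (Suc 0) \<union> lcs G (Suc (Suc 0)))"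
    by (intro mono_generate) blast
  then show ?case
    using gen by simp
next
  case (Suc k)
  let ?B = "nested_comms G S (Suc (Suc k)) \<union> lcs G (Suc (Suc (Suc k)))"
  have N: "generate G ?B \<lhd> G"
    using S by (rule generate_nested_comms_Un_lcs_normal)
  have "nested_comms G S (Suc k) \<union> lcs G (Suc (Suc k)) \<subseteq> carrier G"
    using nested_comms_subset_lcs[OF S] lcs_mem_carrier by blast
  then have "gcomm G g h \<in> generate G ?B" if "g \<in> carrier G" "h \<in> lcs G (Suc k)" for g h
    using gcomm_generate_right[OF N _ that(1) gcomm_mem_generate_nested_comms[OF S gen that(1)]]
      Suc.IH that(2) by blast
  then show ?case
    unfolding lcs.simps(3)[of G k] by (intro generate_subgroup_incl[OF _ normal_imp_subgroup[OF N]]) blast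
qed
end

definition lin_comb :: "('a, 'b) monoid_scheme \<Rightarrow> ('c \<Rightarrow> 'a \<Rightarrow> 'a) \<Rightarrow> ('c \<times> 'a) list \<Rightarrow> 'a" where
  "lin_comb G f l = foldr (\<lambda>(q, b) acc. f q b \<otimes>\<^bsub>G\<^esub> acc) l \<one>\<^bsub>G\<^esub>"

context group
begin

lemma lin_comb_Nil [simp]: "lin_comb G f [] = \<one>"
  by (simp add: lin_comb_def)

lemma lin_comb_Cons [simp]: "lin_comb G f ((q, b) # l) = f q b \<otimes> lin_comb G f l"
  by (simp add: lin_comb_def)

lemma lin_comb_closed:
  assumes "\<And>q b. b \<in> B \<Longrightarrow> f q b \<in> carrier G"
  shows "snd ` set l \<subseteq> B \<Longrightarrow> lin_comb G f l \<in> carrier G"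
  by (induction l) (auto simp: assms)

lemma lin_comb_append:
  assumes "\<And>q b. b \<in> B \<Longrightarrow> f q b \<in> carrier G" and "snd ` set l' \<subseteq> B"
  shows "snd ` set l \<subseteq> B \<Longrightarrow> lin_comb G f (l @ l') = lin_comb G f l \<otimes> lin_comb G f l'"
proof (induction l)
  case Nil
  then show ?case
    using lin_comb_closed[of B f l'] assms by simp
next
  case (Cons p l)
  obtain q b where p: "p = (q, b)"
    by force
  have "f q b \<in> carrier G" "lin_comb G f l \<in> carrier G" "lin_comb G f l' \<in> carrier G"
    using Cons.prems assms p lin_comb_closed[of B f] by auto
  then show ?case
    using Cons p by (simp add: m_assoc)
qed

lemma generate_subset_lin_combs:
  assumes f: "\<And>q b. b \<in> B \<Longrightarrow> f q b \<in> carrier G"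
    and A: "\<And>a. a \<in> A \<Longrightarrow> (\<exists>q. \<exists>b\<in>B. a = f q b) \<and> (\<exists>q. \<exists>b\<in>B. inv a = f q b)"
  shows "generate G A \<subseteq> {lin_comb G f l | l. snd ` set l \<subseteq> B}"
proof
  fix z assume "z \<in> generate G A"
  then show "z \<in> {lin_comb G f l | l. snd ` set l \<subseteq> B}"
  proof (induction z rule: generate.induct)
    case one
    then show ?case
      by (intro CollectI exI[of _ "[]"]) simp
  next
    case (incl a)
    then obtain q b where "b \<in> B" "a = f q b"
      using A by blast
    then show ?case
      using f by (intro CollectI exI[of _ "[(q, b)]"]) simp
  next
    case (inv a)
    then obtain q b where "b \<in> B" "inv a = f q b"
      using A by blast
    then show ?case
      using f by (intro CollectI exI[of _ "[(q, b)]"]) simp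
  next
    case (eng a a')
    then obtain l l' where "a = lin_comb G f l" "a' = lin_comb G f l'" "snd ` set l \<subseteq> B" "snd ` set l' \<subseteq> B"
      by blast
    then show ?case
      using lin_comb_append[of B f l' l] f by (intro CollectI exI[of _ "l @ l'"]) auto
  qed
qed

end

locale Q_scalable_group = group G for G (structure) +
  fixes \<delta> :: "rat \<Rightarrow> 'a \<Rightarrow> 'a"
  assumes Q_scalable: "Q_scalable G \<delta>"
begin

lemma scale_hom: "l \<noteq> 0 \<Longrightarrow> group_hom G G (\<delta> l)"
  using Q_scalable unfolding Q_scalable_def group_hom_def group_hom_axioms_def
  by (auto intro: iso_imp_homomorphism)

lemma scale_scale: "x \<in> carrier G \<Longrightarrow> \<delta> l (\<delta> m x) = \<delta> (l * m) x"
  using Q_scalable unfolding Q_scalable_def by blast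

lemma scale_zero: "x \<in> carrier G \<Longrightarrow> \<delta> 0 x = \<one>"
  using Q_scalable unfolding Q_scalable_def by blast

lemma scale_closed [simp]: "x \<in> carrier G \<Longrightarrow> \<delta> l x \<in> carrier G"
  by (cases "l = 0") (simp_all add: scale_zero group_hom.hom_closed[OF scale_hom])

lemma scale_mult: "l \<noteq> 0 \<Longrightarrow> x \<in> carrier G \<Longrightarrow> y \<in> carrier G \<Longrightarrow> \<delta> l (x \<otimes> y) = \<delta> l x \<otimes> \<delta> l y"
  by (rule group_hom.hom_mult[OF scale_hom])

lemma scale_inv: "l \<noteq> 0 \<Longrightarrow> x \<in> carrier G \<Longrightarrow> \<delta> l (inv x) = inv (\<delta> l x)"
  by (rule group_hom.hom_inv[OF scale_hom])

lemma scale_by_one [simp]: "x \<in> carrier G \<Longrightarrow> \<delta> 1 x = x"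
proof -
  assume x: "x \<in> carrier G"
  have "inj_on (\<delta> 1) (carrier G)"
    using Q_scalable unfolding Q_scalable_def iso_iff by auto
  moreover have "\<delta> 1 (\<delta> 1 x) = \<delta> 1 x"
    using scale_scale[OF x, of 1 1] by simp
  ultimately show ?thesis
    using x by (auto dest: inj_onD)
qed

lemma scale_gcomm:
  "l \<noteq> 0 \<Longrightarrow> g \<in> carrier G \<Longrightarrow> h \<in> carrier G \<Longrightarrow> \<delta> l (gcomm G g h) = gcomm G (\<delta> l g) (\<delta> l h)"
  by (simp add: gcomm_def scale_mult scale_inv)

lemma scale_nested_comm:
  assumes "l \<noteq> 0"
  shows "set gs \<subseteq> carrier G \<Longrightarrow> \<delta> l (nested_comm G gs) = nested_comm G (map (\<delta> l) gs)"
proof (induction gs)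
  case Nil
  then show ?case using group_hom.hom_one[OF scale_hom[OF assms]] by simp
next
  case (Cons g gs)
  then show ?case
    using assms by (cases "gs = []") (simp_all add: nested_comm_Cons scale_gcomm)
qed

lemma V1_carrier: "y \<in> V1 G \<delta> \<Longrightarrow> y \<in> carrier G"
  by (simp add: V1_def)

lemma V1_scale_add: "y \<in> V1 G \<delta> \<Longrightarrow> \<delta> (t + t') y = \<delta> t y \<otimes> \<delta> t' y"
  by (simp add: V1_def)

end

locale top_nested_comm = Q_scalable_group +
  fixes s :: nat and ys :: "nat \<Rightarrow> 'a"
  assumes lcs_Suc_trivial: "lcs G (Suc s) = {\<one>}"
    and ys_V1: "\<And>j. j < s \<Longrightarrow> ys j \<in> V1 G \<delta>"
begin

definition scaled_comm :: "(nat \<Rightarrow> rat) \<Rightarrow> 'a" where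
  "scaled_comm \<tau> = nested_comm G (map (\<lambda>j. \<delta> (\<tau> j) (ys j)) [0..<s])"

lemma ys_carrier: "j < s \<Longrightarrow> ys j \<in> carrier G"
  using ys_V1 V1_carrier by blast

lemma scaled_comm_closed [simp]: "scaled_comm \<tau> \<in> carrier G"
  unfolding scaled_comm_def by (rule nested_comm_closed) (auto simp: ys_carrier)

lemma scaled_comm_cong: "(\<And>j. j < s \<Longrightarrow> \<tau> j = \<tau>' j) \<Longrightarrow> scaled_comm \<tau> = scaled_comm \<tau>'"
  unfolding scaled_comm_def by (intro arg_cong[where f = "nested_comm G"] map_cong) simp_all

lemma scaled_comm_add:
  assumes i: "i < s"
  shows "scaled_comm (\<tau>(i := t + t')) = scaled_comm (\<tau>(i := t)) \<otimes> scaled_comm (\<tau>(i := t'))"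
proof -
  have split: "[0..<s] = [0..<i] @ i # [Suc i..<s]"
    using i by (metis le0 upt_add_eq_append upt_conv_Cons add_0 le_add_diff_inverse less_imp_le_nat)
  let ?us = "map (\<lambda>j. \<delta> (\<tau> j) (ys j)) [0..<i]"
  let ?vs = "map (\<lambda>j. \<delta> (\<tau> j) (ys j)) [Suc i..<s]"
  have eq: "scaled_comm (\<tau>(i := u)) = nested_comm G (?us @ \<delta> u (ys i) # ?vs)" for u
  proof -
    have us: "map (\<lambda>j. \<delta> ((\<tau>(i := u)) j) (ys j)) [0..<i] = ?us"
      and vs: "map (\<lambda>j. \<delta> ((\<tau>(i := u)) j) (ys j)) [Suc i..<s] = ?vs"
      by (rule map_cong[OF refl], simp)+
    show ?thesis
      unfolding scaled_comm_def split map_append list.map(2) us vs by simp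
  qed
  have "length ?us + Suc (length ?vs) = s"
    using i by simp
  moreover have "set ?us \<subseteq> carrier G" "set ?vs \<subseteq> carrier G"
    using i ys_carrier by auto
  ultimately show ?thesis
    unfolding eq V1_scale_add[OF ys_V1[OF i]]
    using nested_comm_mult[of ?us ?vs "\<delta> t (ys i)" "\<delta> t' (ys i)"] lcs_Suc_trivial ys_carrier[OF i]
    by simp
qed

lemma scaled_comm_zero:
  assumes i: "i < s"
  shows "scaled_comm (\<tau>(i := 0)) = \<one>"
proof -
  have "scaled_comm (\<tau>(i := 0)) = scaled_comm (\<tau>(i := 0)) \<otimes> scaled_comm (\<tau>(i := 0))"
    using scaled_comm_add[OF i, of \<tau> 0 0] by simp
  then show ?thesis
    by simp
qed

lemma scaled_comm_uminus:
  assumes i: "i < s"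
  shows "scaled_comm (\<tau>(i := - t)) = inv (scaled_comm (\<tau>(i := t)))"
proof -
  have "scaled_comm (\<tau>(i := - t)) \<otimes> scaled_comm (\<tau>(i := t)) = \<one>"
    using scaled_comm_add[OF i, of \<tau> "- t" t] scaled_comm_zero[OF i] by simp
  then show ?thesis
    by (intro inv_equality[symmetric]) simp_all
qed

lemma scaled_comm_of_nat:
  assumes i: "i < s"
  shows "scaled_comm (\<tau>(i := of_nat n * t)) = scaled_comm (\<tau>(i := t)) [^] n"
proof (induction n)
  case 0
  show ?case
    by (simp only: of_nat_0 mult_zero_left nat_pow_0 scaled_comm_zero[OF i])
next
  case (Suc n)
  have "of_nat (Suc n) * t = of_nat n * t + t"
    by (simp add: distrib_right)
  then have "scaled_comm (\<tau>(i := of_nat (Suc n) * t)) = scaled_comm (\<tau>(i := of_nat n * t)) \<otimes> scaled_comm (\<tau>(i := t))"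
    by (simp only: scaled_comm_add[OF i])
  then show ?case
    using Suc.IH by (simp only: nat_pow_Suc)
qed

lemma scaled_comm_of_int:
  assumes i: "i < s"
  shows "scaled_comm (\<tau>(i := of_int k * t)) = scaled_comm (\<tau>(i := t)) [^] k"
proof (cases "k \<ge> 0")
  case True
  then obtain n where "k = int n"
    using nonneg_int_cases by blast
  then show ?thesis
    using scaled_comm_of_nat[OF i] by (simp add: int_pow_int)
next
  case False
  then obtain n where k: "k = - int n"
    by (metis int_cases2 of_nat_0_le_iff)
  then have "scaled_comm (\<tau>(i := of_int k * t)) = inv (scaled_comm (\<tau>(i := t)) [^] n)"
    using scaled_comm_uminus[OF i, of \<tau> "of_nat n * t"] scaled_comm_of_nat[OF i] by simp
  then show ?thesis
    using k int_pow_neg_int[OF scaled_comm_closed] by simp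
qed

lemma scaled_comm_swap_int:
  assumes "i < s" "j < s" "i \<noteq> j"
  shows "scaled_comm (\<tau>(i := of_int k * x, j := y)) = scaled_comm (\<tau>(i := x, j := of_int k * y))"
proof -
  have twist: "\<tau>(i := u, j := v) = \<tau>(j := v, i := u)" for u v
    using assms(3) by (rule fun_upd_twist)
  have "scaled_comm (\<tau>(i := of_int k * x, j := y)) = scaled_comm ((\<tau>(j := y))(i := x)) [^] k"
    unfolding twist by (rule scaled_comm_of_int[OF assms(1)])
  also have "\<dots> = scaled_comm (\<tau>(i := x, j := of_int k * y))"
    unfolding twist[symmetric] by (rule scaled_comm_of_int[OF assms(2), symmetric])
  finally show ?thesis .
qed

text \<open>A rational scalar \<open>a / b\<close> moves from slot \<open>p\<close> into slot \<open>0\<close>: the integer \<open>a\<close> can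
  be moved directly, and then the integer \<open>b\<close> can be moved back from slot \<open>0\<close>, where
  it cancels the remaining \<open>1 / b\<close>.\<close>
lemma scaled_comm_move_scalar:
  assumes p: "0 < p" "p < s"
  shows "scaled_comm \<tau> = scaled_comm (\<tau>(0 := \<tau> 0 * \<tau> p, p := 1))"
proof -
  obtain a b where q: "quotient_of (\<tau> p) = (a, b)"
    by force
  have b: "(of_int b :: rat) \<noteq> 0"
    using quotient_of_denom_pos[OF q] by simp
  have \<tau>p: "\<tau> p = of_int a * (1 / of_int b)"
    using quotient_of_div[OF q] by simp
  have s0: "0 < s" and p0: "p \<noteq> 0"
    using p by simp_all
  have "scaled_comm \<tau> = scaled_comm (\<tau>(p := of_int a * (1 / of_int b), 0 := \<tau> 0))"
    by (simp only: \<tau>p[symmetric] fun_upd_triv)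
  also have "\<dots> = scaled_comm (\<tau>(p := 1 / of_int b, 0 := of_int a * \<tau> 0))"
    by (rule scaled_comm_swap_int[OF p(2) s0 p0])
  also have "\<tau>(p := 1 / of_int b, 0 := of_int a * \<tau> 0)
      = \<tau>(0 := of_int b * (of_int a * \<tau> 0 / of_int b), p := 1 / of_int b)"
    using b p0 by (simp add: fun_upd_twist)
  also have "scaled_comm \<dots> = scaled_comm (\<tau>(0 := of_int a * \<tau> 0 / of_int b, p := of_int b * (1 / of_int b)))"
    using s0 p p0 by (intro scaled_comm_swap_int) auto
  also have "\<tau>(0 := of_int a * \<tau> 0 / of_int b, p := of_int b * (1 / of_int b)) = \<tau>(0 := \<tau> 0 * \<tau> p, p := 1)"
    using b \<tau>p by (simp add: mult.commute)
  finally show ?thesis .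
qed

lemma scaled_comm_collect:
  assumes "1 \<le> p" "p \<le> s"
  shows "scaled_comm \<tau> = scaled_comm (\<lambda>j. if j = 0 then \<Prod>i<p. \<tau> i else if j < p then 1 else \<tau> j)"
  using assms(1)
proof (induction p rule: dec_induct)
  case base
  show ?case
    by (rule arg_cong[where f = scaled_comm]) auto
next
  case (step n)
  let ?\<tau> = "\<lambda>j. if j = 0 then \<Prod>i<n. \<tau> i else if j < n then 1 else \<tau> j"
  have "scaled_comm \<tau> = scaled_comm ?\<tau>"
    by (fact step.IH)
  also have "\<dots> = scaled_comm (?\<tau>(0 := ?\<tau> 0 * ?\<tau> n, n := 1))"
    using step.hyps assms(2) by (intro scaled_comm_move_scalar) auto
  also have "?\<tau>(0 := ?\<tau> 0 * ?\<tau> n, n := 1)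
      = (\<lambda>j. if j = 0 then \<Prod>i<Suc n. \<tau> i else if j < Suc n then 1 else \<tau> j)"
    using step.hyps by (auto simp: fun_eq_iff)
  finally show ?case .
qed

lemma scaled_comm_eq_if_prod_eq:
  assumes "0 < s" "(\<Prod>j<s. \<tau> j) = (\<Prod>j<s. \<tau>' j)"
  shows "scaled_comm \<tau> = scaled_comm \<tau>'"
proof -
  have "scaled_comm \<tau> = scaled_comm (\<lambda>j. if j = 0 then \<Prod>i<s. \<tau> i else if j < s then 1 else \<tau> j)"
    using assms(1) by (intro scaled_comm_collect) auto
  also have "\<dots> = scaled_comm (\<lambda>j. if j = 0 then \<Prod>i<s. \<tau>' i else if j < s then 1 else \<tau>' j)"
    using assms(2) by (intro scaled_comm_cong) simp
  also have "\<dots> = scaled_comm \<tau>'"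
    using assms(1) by (intro scaled_comm_collect[symmetric]) auto
  finally show ?thesis .
qed

lemma scale_scaled_comm:
  assumes "l \<noteq> 0"
  shows "\<delta> l (scaled_comm \<tau>) = scaled_comm (\<lambda>j. l * \<tau> j)"
proof -
  have "set (map (\<lambda>j. \<delta> (\<tau> j) (ys j)) [0..<s]) \<subseteq> carrier G"
    using ys_carrier by auto
  moreover have "map (\<delta> l) (map (\<lambda>j. \<delta> (\<tau> j) (ys j)) [0..<s]) = map (\<lambda>j. \<delta> (l * \<tau> j) (ys j)) [0..<s]"
    by (auto simp: ys_carrier scale_scale)
  ultimately show ?thesis
    unfolding scaled_comm_def by (simp only: scale_nested_comm[OF assms])
qed

lemma inv_scaled_comm: "0 < s \<Longrightarrow> inv (scaled_comm \<tau>) = scaled_comm (\<tau>(0 := - \<tau> 0))"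
  using scaled_comm_uminus[of 0 \<tau> "\<tau> 0"] by simp

lemma scaled_comm_eq_sigma:
  assumes "1 \<le> s"
  shows "scaled_comm \<tau> = sigma G \<delta> s (\<Prod>j<s. \<tau> j) (scaled_comm (\<lambda>_. 1))"
proof (cases "s = 1")
  case True
  then have "scaled_comm \<tau>' = \<delta> (\<tau>' 0) (ys 0)" for \<tau>'
    unfolding scaled_comm_def by simp
  then show ?thesis
    using True ys_carrier[of 0] by (simp add: sigma_def scale_scale)
next
  case False
  let ?q = "\<Prod>j<s. \<tau> j"
  obtain n m where q: "quotient_of ?q = (n, m)"
    by force
  have m: "(of_int m :: rat) \<noteq> 0"
    using quotient_of_denom_pos[OF q] by simp
  define N where "N = n * m ^ (s - 1)"
  obtain s' where s': "s = Suc s'"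
    using assms by (cases s) auto
  let ?\<tau> = "\<lambda>j. 1 / of_int m * ((\<lambda>_. 1)(0 := of_int N)) j"
  have "sigma G \<delta> s ?q (scaled_comm (\<lambda>_. 1)) = \<delta> (1 / of_int m) (scaled_comm (\<lambda>_. 1) [^] N)"
    using False q by (simp add: sigma_def N_def)
  also have "scaled_comm (\<lambda>_. 1) [^] N = scaled_comm ((\<lambda>_. 1)(0 := of_int N))"
    using scaled_comm_of_int[of 0 "\<lambda>_. 1" N 1] assms by (simp add: fun_upd_idem)
  also have "\<delta> (1 / of_int m) \<dots> = scaled_comm ?\<tau>"
    using m by (simp add: scale_scaled_comm)
  also have "\<dots> = scaled_comm \<tau>"
  proof (rule scaled_comm_eq_if_prod_eq)
    have "(\<Prod>j<s. ?\<tau> j) = (1 / of_int m) ^ s * of_int N"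
      unfolding s' prod.lessThan_Suc_shift by (simp add: mult_ac)
    also have "\<dots> = ?q"
      using quotient_of_div[OF q] m unfolding N_def s' by (simp add: field_simps)
    finally show "(\<Prod>j<s. ?\<tau> j) = ?q" .
  qed (use s' in simp)
  finally show ?thesis ..
qed

end

lemma (in Q_scalable_group) sigma_closed: "b \<in> carrier G \<Longrightarrow> sigma G \<delta> s q b \<in> carrier G"
  by (auto simp: sigma_def split: prod.split)

lemma (in Q_scalable_group) nested_comm_scaled_eq_sigma:
  assumes top: "lcs G (Suc s) = {\<one>}" and s: "1 \<le> s" and x: "\<forall>i\<in>I. x i \<in> V1 G \<delta>"
    and gs: "length gs = s" "set gs \<subseteq> {\<delta> q (x i) | q i. i \<in> I}"
  obtains zs q q' where "length zs = s" "set zs \<subseteq> x ` I"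
    and "nested_comm G gs = sigma G \<delta> s q (nested_comm G zs)"
    and "inv (nested_comm G gs) = sigma G \<delta> s q' (nested_comm G zs)"
proof -
  have "\<forall>j\<in>{..<s}. \<exists>p. gs ! j = \<delta> (fst p) (x (snd p)) \<and> snd p \<in> I"
    using gs nth_mem by fastforce
  then obtain p where p: "\<And>j. j < s \<Longrightarrow> gs ! j = \<delta> (fst (p j)) (x (snd (p j))) \<and> snd (p j) \<in> I"
    by (metis lessThan_iff bchoice)
  define ys where "ys = (\<lambda>j. x (snd (p j)))"
  interpret top_nested_comm G \<delta> s ys
    using top p x by unfold_locales (auto simp: ys_def)
  have "gs = map (\<lambda>j. \<delta> (fst (p j)) (ys j)) [0..<s]"
    using gs p by (auto intro: nth_equalityI simp: ys_def)
  then have gs_eq: "nested_comm G gs = scaled_comm (\<lambda>j. fst (p j))"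
    by (simp add: scaled_comm_def)
  have basis: "scaled_comm (\<lambda>_. 1) = nested_comm G (map ys [0..<s])"
    unfolding scaled_comm_def by (intro arg_cong[where f = "nested_comm G"] map_cong) (simp_all add: ys_carrier)
  show thesis
  proof (rule that)
    show "length (map ys [0..<s]) = s" "set (map ys [0..<s]) \<subseteq> x ` I"
      using p by (auto simp: ys_def)
    show "nested_comm G gs = sigma G \<delta> s (\<Prod>j<s. fst (p j)) (nested_comm G (map ys [0..<s]))"
      unfolding gs_eq basis[symmetric] by (rule scaled_comm_eq_sigma[OF s])
    have inv: "inv (nested_comm G gs) = scaled_comm ((\<lambda>j. fst (p j))(0 := - fst (p 0)))"
      using s by (simp add: gs_eq inv_scaled_comm)
    show "inv (nested_comm G gs) = sigma G \<delta> s (\<Prod>j<s. ((\<lambda>j. fst (p j))(0 := - fst (p 0))) j) (nested_comm G (map ys [0..<s]))"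
      unfolding basis[symmetric] by (rule trans[OF inv scaled_comm_eq_sigma[OF s]])
  qed
qed

lemma (in Q_scalable_group) lcs_subset_sigma_lin_combs:
  assumes top: "lcs G (Suc s) = {\<one>}" and s: "1 \<le> s" and x: "\<forall>i\<in>I. x i \<in> V1 G \<delta>"
    and gen: "generate G {\<delta> q (x i) | q i. i \<in> I} = carrier G"
  defines "B \<equiv> nested_comm G ` {zs. set zs \<subseteq> x ` I \<and> length zs = s}"
  shows "lcs G s \<subseteq> {lin_comb G (sigma G \<delta> s) l | l. snd ` set l \<subseteq> B}"
proof -
  let ?X = "{\<delta> q (x i) | q i. i \<in> I}"
  have xI: "x ` I \<subseteq> carrier G"
    using x V1_carrier by auto
  then have X: "?X \<subseteq> carrier G"
    by auto
  then have W: "nested_comms G ?X s \<subseteq> carrier G"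
    using nested_comms_subset_lcs lcs_mem_carrier by blast
  have "lcs G s \<subseteq> generate G (nested_comms G ?X s)"
    using lcs_subset_generate_nested_comms[OF X gen, of "s - 1"] s top generate_Un_one[OF W]
    by simp
  also have "\<dots> \<subseteq> {lin_comb G (sigma G \<delta> s) l | l. snd ` set l \<subseteq> B}"
  proof (rule generate_subset_lin_combs)
    show "sigma G \<delta> s q b \<in> carrier G" if "b \<in> B" for q b
      using that xI unfolding B_def by (auto intro!: sigma_closed nested_comm_closed)
    fix w assume "w \<in> nested_comms G ?X s"
    then obtain gs where w: "w = nested_comm G gs" and gs: "length gs = s" "set gs \<subseteq> ?X"
      by (auto simp: nested_comms_def)
    obtain zs q q' where "length zs = s" "set zs \<subseteq> x ` I"
      and "nested_comm G gs = sigma G \<delta> s q (nested_comm G zs)"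
      and "inv (nested_comm G gs) = sigma G \<delta> s q' (nested_comm G zs)"
      by (rule nested_comm_scaled_eq_sigma[OF top s x gs])
    moreover from this have "nested_comm G zs \<in> B"
      unfolding B_def by blast
    ultimately show "(\<exists>q. \<exists>b\<in>B. w = sigma G \<delta> s q b) \<and> (\<exists>q. \<exists>b\<in>B. inv w = sigma G \<delta> s q b)"
      unfolding w by blast
  qed
  finally show ?thesis .
qed

theorem mainTheorem6:
  fixes G :: "('a, 'b) monoid_scheme" and \<delta> :: "rat \<Rightarrow> 'a \<Rightarrow> 'a"
    and s r :: nat and x :: "nat \<Rightarrow> 'a"
  assumes "Q_scalable G \<delta>"
    and "nilpotent_step G s"
    and "\<forall>i\<in>{1..r}. x i \<in> V1 G \<delta>"
    and "generate G {\<delta> q (x i) | q i. i \<in> {1..r}} = carrier G"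
  shows "finite_dim_sigma G \<delta> s"
proof -
  have "group G"
    using assms(1) by (simp add: Q_scalable_def)
  then interpret Q_scalable_group G \<delta>
    using assms(1) by (simp add: Q_scalable_group_def Q_scalable_group_axioms_def)
  define B where "B = nested_comm G ` {zs. set zs \<subseteq> x ` {1..r} \<and> length zs = s}"
  have s: "1 \<le> s" and top: "lcs G (Suc s) = {\<one>\<^bsub>G\<^esub>}"
    using assms(2) by (simp_all add: nilpotent_step_def)
  have "finite B"
    unfolding B_def by (intro finite_imageI finite_lists_length_eq) simp
  moreover have "B \<subseteq> lcs G s"
    unfolding B_def using assms(3) V1_carrier nested_comm_mem_lcs by fastforce
  moreover have "lcs G s \<subseteq> {lin_comb G (sigma G \<delta> s) l | l. snd ` set l \<subseteq> B}"
    unfolding B_def by (rule lcs_subset_sigma_lin_combs[OF top s assms(3,4)])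
  ultimately show ?thesis
    unfolding finite_dim_sigma_def by (intro exI[of _ B]) (auto simp: lin_comb_def)
qed

end
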